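(* Assume the setting in the context, with $\delta=0$ (so $y>0$ and $\theta>0$). Set $A_m=\lfloor z_0/\theta\rfloor$. Write $y_0=\overline{y_0}\,y+\widehat{y_0}$ and $h=\overline{h}\,y+\widehat{h}$ with $0\le \widehat{y_0},\widehat{h}<y$; when $w>0$ also write $x_0=\overline{x_0}\,w+\widehat{x_0}$ and $l=\overline{l}\,w+\widehat{l}$ with $0\le\widehat{x_0},\widehat{l}<w$. (i.1) If $w=0$, then $$d(m,T)=(1+A_m)(1+A_m+\overline{y_0})+(\overline{h}-2)\frac{A_m(1+A_m)}{2}+\sum_{k=0}^{A_m}\left\lfloor\frac{\widehat{y_0}+k\widehat{h}}{y}\right\rfloor. \quad ( * )$$ (i.2) If $w>0$, set $k_0=\left\lceil\frac{z_0w-x_0\theta}{b}\right\rceil$ (then $k_0\ge 0$). (i.2.1) If $k_0=0$, then $d(m,T)$ is given by $( * )$. (i.2.2) If $1\le k_0\le A_m$, then $$d(m,T)=(1+A_m)(1+A_m+\overline{y_0})+k_0(\overline{x_0}-A_m)+(\overline{h}-2)\frac{A_m(1+A_m)}2+\overline{l}\frac{(k_0-1)k_0}{2}+\sum_{k=0}^{A_m}\left\lfloor\frac{\widehat{y_0}+k\widehat{h}}{y}\right\rfloor+\sum_{k=0}^{k_0-1}\left\lfloor\frac{\widehat{x_0}+k\widehat{l}}{w}\right\rfloor.$$ (i.2.3) If $k_0>A_m$, then $$d(m,T)=(1+A_m)(1+\overline{x_0}+\overline{y_0})+(\overline{l}+\overline{h}-2)\frac{A_m(1+A_m)}2+\s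um_{k=0}^{A_m}\left\lfloor\frac{\widehat{x_0}+k\widehat{l}}{w}\right\rfloor+\sum_{k=0}^{A_m}\left\lfloor\frac{\widehat{y_0}+k\widehat{h}}{y}\right\rfloor.$$
   Context: Let $a<b<c$ be positive integers with $\gcd(a,b,c)=1$ and $T=\langle a,b,c\rangle=\{xa+yb+zc:x,y,z\in\mathbb N\}$. For $m\in T$, the denumerant $d(m,T)$ is the number of $(x,y,z)\in\mathbb N^3$ with $xa+yb+zc=m$. For $(i,j)\in\mathbb N^2$ let $[\![i,j]\!]=[i,i+1)\times[j,j+1)\subset\mathbb R^2$. For integers $0\le w<l$, $0\le y<h$, the L-shape $\mathrm L(l,h,w,y)$ is the set of unit squares $[\![i,j]\!]$ with $0\le i<l$, $0\le j<h$, excluding those with $i\ge l-w$ and $j\ge h-y$ (it has $lh-wy$ squares). An L-shape $\mathcal H$ is related to $T$ if it consists of exactly $c$ squares, every residue class modulo $c$ equals $ia+jb \bmod c$ for exactly one $[\![i,j]\!]\in\mathcal H$, and for each $[\![i,j]\!]\in\mathcal H$, $ia+jb=\min\{sa+tb:(s,t)\in\mathbb N^2,\ sa+tb\equiv ia+jb \pmod c\}$. Setting: $\mathcal H=\mathrm L(l,h,w,y)$ is an L-shape related to $T$, and $\delta=(la-yb)/c$, $\theta=(hb-wa)/c$; it is known that $\delta,\theta$ are nonnegative integers with $\delta+\theta>0$, $a=h\delta+y\theta$, $b=w\delta+l\theta$, $lh-wy=c$. For $m\in T$, the basic factorization of $m$ with respect to $\mathcal H$ is the unique $(x_0,y_0,z_0)\in\mathbb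 N^3$ with $x_0a+y_0b+z_0c=m$ and $[\![x_0,y_0]\!]\in\mathcal H$. Fix $m\in T$ with basic factorization $(x_0,y_0,z_0)$. *)

theory Defs
  imports Complex_Main
begin

definition in_sgp :: "nat \<Rightarrow> nat \<Rightarrow> nat \<Rightarrow> nat \<Rightarrow> bool" where
  "in_sgp a b c m \<longleftrightarrow> (\<exists>x y z. x*a + y*b + z*c = m)"

definition denumerant :: "nat \<Rightarrow> nat \<Rightarrow> nat \<Rightarrow> nat \<Rightarrow> nat" where
  "denumerant a b c m = card {(x, y, z). x*a + y*b + z*c = m}"

text \<open>L-shape L(l,h,w,y), a unit square [[i,j]] being represented by (i,j).\<close>
definition Lshape :: "nat \<Rightarrow> nat \<Rightarrow> nat \<Rightarrow> nat \<Rightarrow> (nat \<times> nat) set" where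
  "Lshape l h w y = {(i, j). i < l \<and> j < h \<and> \<not> (l - w \<le> i \<and> h - y \<le> j)}"

definition related :: "nat \<Rightarrow> nat \<Rightarrow> nat \<Rightarrow> (nat \<times> nat) set \<Rightarrow> bool" where
  "related a b c H \<longleftrightarrow>
     card H = c \<and>
     (\<forall>r < c. \<exists>!p. p \<in> H \<and> (fst p * a + snd p * b) mod c = r) \<and>
     (\<forall>(i, j) \<in> H. i*a + j*b =
        (LEAST n. \<exists>s t. n = s*a + t*b \<and> n mod c = (i*a + j*b) mod c))"

definition delta :: "nat \<Rightarrow> nat \<Rightarrow> nat \<Rightarrow> nat \<Rightarrow> nat \<Rightarrow> real" where
  "delta l y a b c = (real l * real a - real y * real b) / real c"

definition theta :: "nat \<Rightarrow> nat \<Rightarrow> nat \<Rightarrow> nat \<Rightarrow> nat \<Rightarrow> real" where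
  "theta h w a b c = (real h * real b - real w * real a) / real c"

end

theory Submission
  imports Defs
begin

text \<open>With \<open>\<delta> = 0\<close> the identities \<open>a = h\<delta> + y\<theta>\<close>, \<open>b = w\<delta> + l\<theta>\<close> become \<open>a = y\<theta>\<close>,
  \<open>b = l\<theta>\<close>; relatedness forces \<open>gcd l y = 1\<close>, and \<open>c = lh - wy\<close>, \<open>gcd \<theta> c = 1\<close>.
  The vectors \<open>(-w, h, -\<theta>)\<close> and \<open>(l, -y, 0)\<close> have weight zero, and the basic
  factorization has the largest \<open>z\<close> (its weight \<open>x0 a + y0 b\<close> is least in its class
  modulo \<open>c\<close>), so the factorizations of \<open>m\<close> are exactly
  \<open>(x0 + jl - kw, y0 + kh - jy, z0 - k\<theta>)\<close> for the lattice points with \<open>0 \<le> k \<le> A\<^sub>m\<close>,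
  \<open>jy \<le> y0 + kh\<close> and \<open>kw \<le> x0 + jl\<close>. Counting \<open>j\<close> in each column gives
  \<open>\<Sum>\<^sub>k (\<lfloor>(y0 + kh)/y\<rfloor> + 1)\<close>, from which one removes the points with \<open>x0 + jl < kw\<close>:
  for fixed \<open>j\<close> these are the \<open>k \<in> ((x0 + jl)/w, A\<^sub>m]\<close>, and there are such \<open>k\<close> only for
  \<open>j < k0\<close> and \<open>j \<le> A\<^sub>m\<close>. Splitting \<open>y0, h, x0, l\<close> into quotient and remainder turns
  both counts into the closed forms.\<close>

lemma card_Lshape:
  assumes "w < l" "y < h"
  shows "card (Lshape l h w y) = l*h - w*y"
proof -
  have L: "Lshape l h w y = {..<l} \<times> {..<h} - {l-w..<l} \<times> {h-y..<h}"
    unfolding Lshape_def by auto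
  have "{l-w..<l} \<times> {h-y..<h} \<subseteq> {..<l} \<times> {..<h}" by auto
  then show ?thesis
    using assms unfolding L by (subst card_Diff_subset) (auto simp: card_cartesian_product)
qed

lemma related_Lshape_coprime:
  assumes "w < l" "y < h" "0 < c"
    and rel: "related a b c (Lshape l h w y)" and weights: "l*a = y*b"
  shows "coprime l y"
proof (rule ccontr)
  assume "\<not> coprime l y"
  define g where "g = gcd l y"
  have "g \<noteq> 1" using \<open>\<not> coprime l y\<close> by (simp add: g_def coprime_iff_gcd_eq_1)
  moreover have "0 < g" using assms(1) by (simp add: g_def)
  ultimately have "1 < g" by simp
  define l' y' where "l' = l div g" and "y' = y div g"
  have l: "l = g*l'" and y: "y = g*y'" unfolding l'_def y'_def g_def by simp_all
  have "0 < l'" using l assms(1) by (cases l') auto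
  have "y' \<le> y" unfolding y using \<open>1 < g\<close> by simp
  have "l'*a = y'*b" using weights \<open>1 < g\<close> unfolding l y by (simp add: ac_simps)
  have "\<exists>!p. p \<in> Lshape l h w y \<and> (fst p * a + snd p * b) mod c = (l'*a) mod c"
    using rel \<open>0 < c\<close> unfolding related_def by auto
  then have unique: "p = q" if "p \<in> Lshape l h w y" "q \<in> Lshape l h w y"
    and "(fst p * a + snd p * b) mod c = (l'*a) mod c" "(fst q * a + snd q * b) mod c = (l'*a) mod c"
    for p q
    using that by blast
  have "(l', 0) \<in> Lshape l h w y" "(0, y') \<in> Lshape l h w y"
    using assms(1,2) \<open>1 < g\<close> \<open>0 < l'\<close> \<open>y' \<le> y\<close> unfolding Lshape_def l by auto
  then have "(l', 0) = (0, y')" using unique[of "(l', 0)" "(0, y')"] \<open>l'*a = y'*b\<close> by simp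
  then show False using \<open>0 < l'\<close> by simp
qed

lemma related_Lshape_delta_zero:
  assumes "0 < a" "w < l" "y < h" "0 < c"
    and rel: "related a b c (Lshape l h w y)" and "delta l y a b c = 0"
  obtains t where "a = y*t" "b = l*t" "0 < t" "0 < y" "coprime l y"
proof -
  have "real (l*a) = real (y*b)" using \<open>delta l y a b c = 0\<close> \<open>0 < c\<close> unfolding delta_def by simp
  then have weights: "l*a = y*b" by (simp only: of_nat_eq_iff)
  have "0 < l*a" using assms(1,2) by simp
  then have "0 < y" using weights by (cases y) simp_all
  have "coprime l y" using related_Lshape_coprime[OF assms(2-4) rel weights] .
  moreover have "y dvd l*a" using weights by simp
  ultimately have "y dvd a" by (simp add: coprime_commute coprime_dvd_mult_right_iff)
  then obtain t where a: "a = y*t" by blast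
  then have "y*(l*t) = y*b" using weights by (simp add: ac_simps)
  then have "b = l*t" using \<open>0 < y\<close> by simp
  moreover have "0 < t" using a \<open>0 < a\<close> by simp
  ultimately show thesis using that a \<open>0 < y\<close> \<open>coprime l y\<close> by blast
qed

lemma related_basic_factorization_max:
  assumes rel: "related a b c H" and "(x0, y0) \<in> H" and "0 < (c::nat)"
    and eq: "x*a + v*b + z*c = x0*a + y0*b + z0*c"
  shows "z \<le> z0"
proof -
  have "\<forall>(i, j) \<in> H. i*a + j*b = (LEAST n. \<exists>s t. n = s*a + t*b \<and> n mod c = (i*a + j*b) mod c)"
    using rel unfolding related_def by blast
  then have least: "x0*a + y0*b = (LEAST n. \<exists>s t. n = s*a + t*b \<and> n mod c = (x0*a + y0*b) mod c)"
    using \<open>(x0, y0) \<in> H\<close> by fastforce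
  have "(x*a + v*b) mod c = (x*a + v*b + z*c) mod c" by simp
  also have "\<dots> = (x0*a + y0*b) mod c" unfolding eq by simp
  finally have "\<exists>s t. x*a + v*b = s*a + t*b \<and> (x*a + v*b) mod c = (x0*a + y0*b) mod c" by blast
  then have "x0*a + y0*b \<le> x*a + v*b" by (subst least) (rule Least_le)
  then have "z*c \<le> z0*c" using eq by linarith
  then show ?thesis using \<open>0 < c\<close> by simp
qed

lemma coprime_mult_eq_mult:
  fixes l y X Y :: int
  assumes "coprime l y" "l \<noteq> 0" "X*y = Y*l"
  obtains j where "X = j*l" "Y = j*y"
proof -
  have "l dvd X" using assms(1,3) by (metis coprime_dvd_mult_left_iff dvd_triv_right)
  then obtain j where X: "X = j*l" by (metis dvd_def mult.commute)
  then have "Y = j*y" using assms(2,3) by (simp add: ac_simps)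
  then show thesis using that X by blast
qed

lemma shifted_factorization:
  fixes a b c l h w y t x0 y0 z0 k j :: nat
  assumes a: "a = y*t" and b: "b = l*t" and c: "int c = int l * int h - int w * int y"
    and "k*t \<le> z0" "j*y \<le> y0 + k*h" "k*w \<le> x0 + j*l"
  shows "(x0 + j*l - k*w)*a + (y0 + k*h - j*y)*b + (z0 - k*t)*c = x0*a + y0*b + z0*c"
proof -
  have "int ((x0 + j*l - k*w)*a + (y0 + k*h - j*y)*b + (z0 - k*t)*c)
      = (int x0 + int j * int l - int k * int w) * (int y * int t)
        + (int y0 + int k * int h - int j * int y) * (int l * int t)
        + (int z0 - int k * int t) * int c"
    using assms(4-6) unfolding a b by (simp add: of_nat_diff)
  also have "\<dots> = int (x0*a + y0*b + z0*c)"
    unfolding a b by (simp add: c algebra_simps)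
  finally show ?thesis by (simp only: of_nat_eq_iff)
qed

lemma factorization_is_shifted:
  fixes a b c l h w y t x0 y0 z0 x v z :: nat
  assumes a: "a = y*t" and b: "b = l*t" and c: "int c = int l * int h - int w * int y"
    and "coprime l y" "coprime t c" "0 < t" "x0 < l"
    and eq: "x*a + v*b + z*c = x0*a + y0*b + z0*c" and "z \<le> z0"
  obtains k j where "k*t \<le> z0" "j*y \<le> y0 + k*h" "k*w \<le> x0 + j*l"
    and "x = x0 + j*l - k*w" "v = y0 + k*h - j*y" "z = z0 - k*t"
proof -
  have eq': "int t * (int x * int y + int v * int l) + int z * int c
      = int t * (int x0 * int y + int y0 * int l) + int z0 * int c"
    using arg_cong[OF eq, of int] unfolding a b by (simp add: algebra_simps)
  then have "(int z0 - int z) * int c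
      = int t * (int x * int y + int v * int l - int x0 * int y - int y0 * int l)"
    by (simp add: algebra_simps)
  then have "int t dvd (int z0 - int z) * int c" by simp
  then have "int t dvd int z0 - int z"
    using \<open>coprime t c\<close> by (simp add: coprime_dvd_mult_left_iff)
  then have "t dvd z0 - z" using \<open>z \<le> z0\<close> by (simp add: of_nat_diff[symmetric] del: of_nat_diff)
  then obtain k where "z0 - z = t*k" by blast
  then have z: "z = z0 - k*t" and "k*t \<le> z0" using \<open>z \<le> z0\<close> by (simp_all add: ac_simps)
  then have "int t * (int x * int y + int v * int l) = int t * (int x0 * int y + int y0 * int l + int k * int c)"
    using eq' by (simp add: of_nat_diff algebra_simps)
  then have "int t * ((int x + int k * int w - int x0) * int y)
      = int t * ((int y0 + int k * int h - int v) * int l)"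
    unfolding c by (simp add: algebra_simps)
  then have "(int x + int k * int w - int x0) * int y = (int y0 + int k * int h - int v) * int l"
    using \<open>0 < t\<close> by simp
  then obtain J where x: "int x + int k * int w - int x0 = J * int l"
    and v: "int y0 + int k * int h - int v = J * int y"
    using coprime_mult_eq_mult[of "int l" "int y"] \<open>coprime l y\<close> \<open>x0 < l\<close> by auto
  have "0 \<le> J"
  proof (rule ccontr)
    assume "\<not> 0 \<le> J"
    then have "J * int l \<le> (-1) * int l" by (intro mult_right_mono) auto
    moreover have "0 \<le> int k * int w" by simp
    ultimately show False using x \<open>x0 < l\<close> by linarith
  qed
  then obtain j where J: "J = int j" by (metis nonneg_eq_int)
  have "int (x + k*w) = int (x0 + j*l)" "int (v + j*y) = int (y0 + k*h)"
    using x v unfolding J by simp_all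
  then have "x + k*w = x0 + j*l" "v + j*y = y0 + k*h" by (simp_all only: of_nat_eq_iff)
  then have "k*w \<le> x0 + j*l" "x = x0 + j*l - k*w" "j*y \<le> y0 + k*h" "v = y0 + k*h - j*y"
    by linarith+
  then show thesis using that z \<open>k*t \<le> z0\<close> by blast
qed

definition floor_sum :: "nat \<Rightarrow> nat \<Rightarrow> nat \<Rightarrow> nat \<Rightarrow> real" where
  "floor_sum p q r N = (\<Sum>k<N. real ((p + k*q) div r))"

lemma floor_sum_0 [simp]: "floor_sum p q r 0 = 0"
  by (simp add: floor_sum_def)

lemma of_int_sum_floor_eq_floor_sum:
  "real_of_int (\<Sum>k\<in>{0..int N - 1}. \<lfloor>(real p + real_of_int k * real q) / real r\<rfloor>)
    = floor_sum p q r N"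
proof -
  have "{0..int N - 1} = int ` {..<N}"
    by (simp add: lessThan_atLeast0 image_int_atLeastLessThan
        flip: atLeastLessThanPlusOne_atLeastAtMost_int)
  moreover have "\<lfloor>(real p + real_of_int (int k) * real q) / real r\<rfloor> = int ((p + k*q) div r)" for k
    using floor_divide_of_nat_eq[of "p + k*q" r] by simp
  ultimately show ?thesis unfolding floor_sum_def by (simp add: sum.reindex)
qed

lemma of_int_sum_floor_atMost_eq_floor_sum:
  "real_of_int (\<Sum>k\<in>{0..int n}. \<lfloor>(real p + real_of_int k * real q) / real r\<rfloor>)
    = floor_sum p q r (Suc n)"
  using of_int_sum_floor_eq_floor_sum[where N = "Suc n"] by simp

lemma div_add_mult_eq:
  fixes p q r k :: nat
  assumes "0 < r"
  shows "(p + k*q) div r = p div r + k*(q div r) + (p mod r + k*(q mod r)) div r"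
proof -
  have "p + k*q = (p div r * r + p mod r) + k*(q div r * r + q mod r)"
    by simp
  also have "\<dots> = (p mod r + k*(q mod r)) + (p div r + k*(q div r))*r"
    by (simp only: distrib_left distrib_right ac_simps)
  finally have "(p + k*q) div r = ((p mod r + k*(q mod r)) + (p div r + k*(q div r))*r) div r"
    by simp
  then show ?thesis using assms by simp
qed

lemma floor_sum_reduce:
  assumes "0 < r"
  shows "floor_sum p q r N = real N * real (p div r) + real (q div r) * (real N * (real N - 1) / 2)
    + floor_sum (p mod r) (q mod r) r N"
proof -
  have gauss: "(\<Sum>k<N. real k) = real N * (real N - 1) / 2"
    by (induction N) (auto simp: field_simps)
  have "floor_sum p q r N = (\<Sum>k<N. real (p div r) + real (q div r) * real k
      + real ((p mod r + k*(q mod r)) div r))"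
    unfolding floor_sum_def by (intro sum.cong refl, subst div_add_mult_eq[OF assms]) simp
  also have "\<dots> = real N * real (p div r) + real (q div r) * (\<Sum>k<N. real k)
      + floor_sum (p mod r) (q mod r) r N"
    unfolding floor_sum_def by (simp add: sum.distrib sum_distrib_left)
  finally show ?thesis unfolding gauss .
qed

text \<open>Since \<open>wy \<le> lh\<close>, the points with \<open>x0 + jl < kw\<close> all satisfy \<open>jy \<le> y0 + kh\<close>.\<close>

lemma real_card_lattice_points:
  fixes y0 h y x0 l w n :: nat
  assumes "0 < y" "0 < l" "w*y \<le> l*h"
  shows "real (card {(k,j). k \<le> n \<and> j*y \<le> y0 + k*h \<and> k*w \<le> x0 + j*l})
    = (\<Sum>k\<le>n. real ((y0 + k*h) div y) + 1) - real (card {(k,j). k \<le> n \<and> x0 + j*l < k*w})"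
proof -
  define P where "P = {(k,j). k \<le> n \<and> j*y \<le> y0 + k*h}"
  define Q where "Q = {(k,j). k \<le> n \<and> x0 + j*l < k*w}"
  have P: "P = Sigma {..n} (\<lambda>k. {..(y0 + k*h) div y})"
    unfolding P_def using \<open>0 < y\<close> by (auto simp: less_eq_div_iff_mult_less_eq)
  have "Q \<subseteq> P"
  proof
    fix p assume "p \<in> Q"
    then obtain k j where p: "p = (k, j)" "k \<le> n" "x0 + j*l < k*w" unfolding Q_def by auto
    then have "j*l*y \<le> k*w*y" by simp
    also have "\<dots> \<le> k*(l*h)" using assms(3) by (simp add: mult.assoc)
    finally have "l*(j*y) \<le> l*(k*h)" by (simp add: ac_simps)
    then have "j*y \<le> k*h" using \<open>0 < l\<close> by simp
    then show "p \<in> P" using p unfolding P_def by simp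
  qed
  moreover have "finite P" unfolding P by simp
  ultimately have "real (card (P - Q)) = real (card P) - real (card Q)"
    by (simp add: card_Diff_subset card_mono finite_subset of_nat_diff)
  moreover have "{(k,j). k \<le> n \<and> j*y \<le> y0 + k*h \<and> k*w \<le> x0 + j*l} = P - Q"
    unfolding P_def Q_def by auto
  moreover have "real (card P) = (\<Sum>k\<le>n. real ((y0 + k*h) div y) + 1)"
    unfolding P by (simp add: add.commute)
  ultimately show ?thesis unfolding Q_def by simp
qed

lemma card_points_under_line:
  fixes x0 l w n K :: nat
  assumes "0 < w" and above: "\<And>j. K \<le> j \<Longrightarrow> n*w \<le> x0 + j*l"
  shows "card {(k,j). k \<le> n \<and> x0 + j*l < k*w} = (\<Sum>j<K. n - (x0 + j*l) div w)"
proof -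
  have "j < K" if "k \<le> n" "x0 + j*l < k*w" for k j
  proof (rule ccontr)
    assume "\<not> j < K"
    then have "n*w \<le> x0 + j*l" using above by simp
    moreover have "k*w \<le> n*w" using that(1) by simp
    ultimately show False using that(2) by linarith
  qed
  then have "{(k,j). k \<le> n \<and> x0 + j*l < k*w}
      = (\<lambda>(j,k). (k,j)) ` Sigma {..<K} (\<lambda>j. {(x0 + j*l) div w<..n})"
    by (auto simp: image_iff div_less_iff_less_mult[OF \<open>0 < w\<close>])
  moreover have "inj_on (\<lambda>(j,k). (k::nat, j::nat)) X" for X by (auto simp: inj_on_def)
  ultimately show ?thesis by (simp add: card_image)
qed

lemma div_le_div_if_mult_less:
  fixes X w t z :: nat
  assumes "0 < t" "X*t < z*w"
  shows "X div w \<le> z div t"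
proof -
  have "X div w * w * t \<le> X * t" by simp
  moreover have "X div w * w * t = (X div w * t) * w" by (simp only: ac_simps)
  ultimately have "(X div w * t) * w < z * w" using assms(2) by linarith
  then have "X div w * t < z" by (rule mult_less_cancel2[THEN iffD1, THEN conjunct2])
  then show ?thesis using assms(1) by (simp add: less_eq_div_iff_mult_less_eq)
qed

lemma div_mult_le_if_mult_le:
  fixes X w t z :: nat
  assumes "0 < t" "z*w \<le> X*t"
  shows "z div t * w \<le> X"
proof -
  have "z div t * t * w \<le> z * w" by simp
  moreover have "z div t * t * w = (z div t * w) * t" by (simp only: ac_simps)
  ultimately have "(z div t * w) * t \<le> X * t" using assms(2) by linarith
  then show ?thesis using assms(1) by simp
qed

locale delta_zero_Lshape =
  fixes a b c l h w y m x0 y0 z0 \<theta> :: nat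
  assumes gcd_abc: "gcd a (gcd b c) = 1" and c_pos: "0 < c"
    and w_less_l: "w < l" and y_less_h: "y < h"
    and related: "related a b c (Lshape l h w y)"
    and a_eq: "a = y*\<theta>" and b_eq: "b = l*\<theta>" and \<theta>_pos: "0 < \<theta>" and y_pos: "0 < y"
    and coprime_l_y: "coprime l y"
    and basic_factorization: "x0*a + y0*b + z0*c = m" "(x0, y0) \<in> Lshape l h w y"
begin

definition A :: nat where "A = z0 div \<theta>"

definition excess :: nat where "excess = card {(k,j). k \<le> A \<and> x0 + j*l < k*w}"

definition k0 :: int where "k0 = \<lceil>(real z0 * real w - real x0 * real \<theta>) / real b\<rceil>"

lemma c_eq: "c = l*h - w*y" and wy_less_lh: "w*y < l*h"
proof -
  show "c = l*h - w*y"
    using related card_Lshape[OF w_less_l y_less_h] by (simp add: related_def)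
  then show "w*y < l*h" using c_pos by simp
qed

lemma int_c_eq: "int c = int l * int h - int w * int y"
  using c_eq wy_less_lh by (simp add: of_nat_diff)

lemma coprime_\<theta>_c: "coprime \<theta> c"
proof -
  have "\<theta> dvd a" "\<theta> dvd b" using a_eq b_eq by simp_all
  then show ?thesis using gcd_abc
    by (meson coprime_common_divisor_nat coprime_iff_gcd_eq_1 gcd_nat.coboundedI1 gcd_unique_nat)
qed

lemma x0_less_l: "x0 < l"
  using basic_factorization(2) by (simp add: Lshape_def)

lemma theta_eq: "theta h w a b c = real \<theta>"
proof -
  have "real h * real b - real w * real a = real \<theta> * real c"
    using c_eq wy_less_lh unfolding a_eq b_eq by (simp add: of_nat_diff algebra_simps)
  then show ?thesis unfolding theta_def using c_pos by simp
qed

lemma floor_z0_div_\<theta>: "\<lfloor>real z0 / real \<theta>\<rfloor> = int A"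
  unfolding A_def by (simp add: floor_divide_of_nat_eq)

lemma denumerant_eq_card:
  "denumerant a b c m = card {(k,j). k \<le> A \<and> j*y \<le> y0 + k*h \<and> k*w \<le> x0 + j*l}"
proof -
  define shift where "shift = (\<lambda>(k,j). (x0 + j*l - k*w, y0 + k*h - j*y, z0 - k*\<theta>))"
  define P where "P = {(k,j). k \<le> A \<and> j*y \<le> y0 + k*h \<and> k*w \<le> x0 + j*l}"
  have le_A: "k \<le> A \<longleftrightarrow> k*\<theta> \<le> z0" for k
    unfolding A_def using \<theta>_pos by (simp add: less_eq_div_iff_mult_less_eq)
  have "inj_on shift P"
  proof (rule inj_onI, clarsimp simp: P_def shift_def le_A)
    fix k j k' j'
    assume "k*\<theta> \<le> z0" "j*y \<le> y0 + k*h" "k'*\<theta> \<le> z0" "j'*y \<le> y0 + k'*h"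
      and "z0 - k*\<theta> = z0 - k'*\<theta>" "y0 + k*h - j*y = y0 + k'*h - j'*y"
    then have "k*\<theta> = k'*\<theta>" by linarith
    then have "k = k'" using \<theta>_pos by simp
    then have "j*y = j'*y" using \<open>j*y \<le> y0 + k*h\<close> \<open>j'*y \<le> y0 + k'*h\<close>
        \<open>y0 + k*h - j*y = y0 + k'*h - j'*y\<close> unfolding \<open>k = k'\<close> by linarith
    then show "k = k' \<and> j = j'" using \<open>k = k'\<close> y_pos by simp
  qed
  moreover have "shift ` P = {(x, v, z). x*a + v*b + z*c = m}"
  proof (intro equalityI subsetI)
    fix s assume "s \<in> shift ` P"
    then show "s \<in> {(x, v, z). x*a + v*b + z*c = m}"
      using shifted_factorization[OF a_eq b_eq int_c_eq] basic_factorization(1)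
      by (auto simp: P_def shift_def le_A)
  next
    fix s assume "s \<in> {(x, v, z). x*a + v*b + z*c = m}"
    then obtain x v z where s: "s = (x, v, z)" and fact: "x*a + v*b + z*c = x0*a + y0*b + z0*c"
      using basic_factorization(1) by auto
    have "z \<le> z0"
      using related_basic_factorization_max[OF related basic_factorization(2) c_pos fact] .
    then obtain k j where "k*\<theta> \<le> z0" "j*y \<le> y0 + k*h" "k*w \<le> x0 + j*l"
      and "x = x0 + j*l - k*w" "v = y0 + k*h - j*y" "z = z0 - k*\<theta>"
      using factorization_is_shifted[OF a_eq b_eq int_c_eq coprime_l_y coprime_\<theta>_c \<theta>_pos
          x0_less_l fact] by blast
    then have "(k, j) \<in> P" "s = shift (k, j)" using s by (simp_all add: P_def shift_def le_A)
    then show "s \<in> shift ` P" by blast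
  qed
  ultimately show ?thesis unfolding denumerant_def P_def[symmetric] by (metis card_image)
qed

lemma denumerant_eq_minus_excess:
  "real (denumerant a b c m) = (1 + real A) * (1 + real A + real (y0 div y))
    + (real (h div y) - 2) * (real A * (1 + real A) / 2)
    + floor_sum (y0 mod y) (h mod y) y (Suc A) - real excess"
proof -
  have "0 < l" using w_less_l by simp
  have "real (denumerant a b c m) = floor_sum y0 h y (Suc A) + real (Suc A) - real excess"
    unfolding denumerant_eq_card excess_def floor_sum_def
    using real_card_lattice_points[OF y_pos \<open>0 < l\<close> less_imp_le[OF wy_less_lh]]
    by (simp add: sum.distrib lessThan_Suc_atMost)
  then show ?thesis using floor_sum_reduce[OF y_pos, of y0 h "Suc A"] by (simp add: field_simps)
qed

lemma real_excess_eq: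
  assumes "0 < w"
    and below: "\<And>j. j < K \<Longrightarrow> (x0 + j*l)*\<theta> < z0*w"
    and above: "\<And>j. K \<le> j \<Longrightarrow> A*w \<le> x0 + j*l"
  shows "real excess = real K * real A - real K * real (x0 div w)
    - real (l div w) * (real K * (real K - 1) / 2) - floor_sum (x0 mod w) (l mod w) w K"
proof -
  have "(x0 + j*l) div w \<le> A" if "j < K" for j
    unfolding A_def using div_le_div_if_mult_less[OF \<theta>_pos below[OF that]] .
  then have "real excess = (\<Sum>j<K. real A - real ((x0 + j*l) div w))"
    using card_points_under_line[OF \<open>0 < w\<close> above]
    by (simp add: excess_def of_nat_diff)
  also have "\<dots> = real K * real A - floor_sum x0 l w K"
    unfolding floor_sum_def by (simp add: sum_subtractf)
  finally show ?thesis using floor_sum_reduce[OF \<open>0 < w\<close>, of x0 l K] by simp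
qed

lemma less_k0_iff: "int j < k0 \<longleftrightarrow> (x0 + j*l)*\<theta> < z0*w"
proof -
  have "0 < real b" using b_eq \<theta>_pos w_less_l by simp
  have "int j < k0 \<longleftrightarrow> real j * real b < real z0 * real w - real x0 * real \<theta>"
    unfolding k0_def using \<open>0 < real b\<close> by (simp add: less_ceiling_iff pos_less_divide_eq)
  also have "\<dots> \<longleftrightarrow> real ((x0 + j*l)*\<theta>) < real (z0*w)"
    unfolding b_eq by (simp add: algebra_simps)
  finally show ?thesis by (simp only: of_nat_less_iff)
qed

lemma k0_nonneg: "0 \<le> k0"
proof -
  have "real x0 * real \<theta> < real b" using x0_less_l \<theta>_pos unfolding b_eq by simp
  moreover have "0 \<le> real z0 * real w" by simp
  ultimately have "- real b < real z0 * real w - real x0 * real \<theta>" by linarith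
  then have "-1 < (real z0 * real w - real x0 * real \<theta>) / real b"
    using b_eq \<theta>_pos w_less_l by (simp add: field_simps)
  then show ?thesis unfolding k0_def by simp
qed

lemma real_excess_if_k0_eq:
  assumes "0 < w" "k0 = int K"
  shows "real excess = real K * real A - real K * real (x0 div w)
    - real (l div w) * (real K * (real K - 1) / 2) - floor_sum (x0 mod w) (l mod w) w K"
proof (rule real_excess_eq[OF \<open>0 < w\<close>])
  fix j
  show "j < K \<Longrightarrow> (x0 + j*l)*\<theta> < z0*w" using less_k0_iff \<open>k0 = int K\<close> by simp
next
  fix j
  assume "K \<le> j"
  then have "z0*w \<le> (x0 + j*l)*\<theta>" using less_k0_iff[of j] \<open>k0 = int K\<close> by simp
  then show "A*w \<le> x0 + j*l" unfolding A_def by (rule div_mult_le_if_mult_le[OF \<theta>_pos])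
qed

lemma real_excess_if_A_less_k0:
  assumes "0 < w" "int A < k0"
  shows "real excess = real (Suc A) * real A - real (Suc A) * real (x0 div w)
    - real (l div w) * (real (Suc A) * (real (Suc A) - 1) / 2)
    - floor_sum (x0 mod w) (l mod w) w (Suc A)"
proof (rule real_excess_eq[OF \<open>0 < w\<close>])
  fix j
  assume "j < Suc A"
  then have "int j < k0" using \<open>int A < k0\<close> by linarith
  then show "(x0 + j*l)*\<theta> < z0*w" using less_k0_iff by simp
next
  fix j
  show "Suc A \<le> j \<Longrightarrow> A*w \<le> x0 + j*l"
    using mult_le_mono[of A j w l] w_less_l by simp
qed

end

theorem theorem5:
  fixes a b c l h w y m x0 y0 z0 :: nat
  assumes "0 < a" and "a < b" and "b < c" and "gcd a (gcd b c) = 1"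
    and "w < l" and "y < h"
    and "related a b c (Lshape l h w y)"
    and "delta l y a b c = 0"
    and "in_sgp a b c m"
    and "x0*a + y0*b + z0*c = m" and "(x0, y0) \<in> Lshape l h w y"
  shows "let \<theta> = theta h w a b c;
      A = \<lfloor>real z0 / \<theta>\<rfloor>;
      yb0 = y0 div y; yh0 = y0 mod y; hb = h div y; hh = h mod y;
      xb0 = x0 div w; xh0 = x0 mod w; lb = l div w; lh = l mod w;
      k0 = \<lceil>(real z0 * real w - real x0 * \<theta>) / real b\<rceil>;
      d = real (denumerant a b c m);
      SY = (\<Sum>k\<in>{0..A}. \<lfloor>(real yh0 + real_of_int k * real hh) / real y\<rfloor>);
      F1 = real_of_int (1 + A) * real_of_int (1 + A + int yb0)
            + (real hb - 2) * (real_of_int A * real_of_int (1 + A) / 2) + real_of_int SY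
    in (w = 0 \<longrightarrow> d = F1) \<and>
    (0 < w \<longrightarrow>
      0 \<le> k0 \<and>
      (k0 = 0 \<longrightarrow> d = F1) \<and>
      (1 \<le> k0 \<and> k0 \<le> A \<longrightarrow>
         d = real_of_int (1 + A) * real_of_int (1 + A + int yb0)
             + real_of_int k0 * (real xb0 - real_of_int A)
             + (real hb - 2) * (real_of_int A * real_of_int (1 + A) / 2)
             + real lb * (real_of_int (k0 - 1) * real_of_int k0 / 2)
             + real_of_int SY
             + real_of_int (\<Sum>k\<in>{0..k0 - 1}. \<lfloor>(real xh0 + real_of_int k * real lh) / real w\<rfloor>)) \<and>
      (A < k0 \<longrightarrow>
         d = real_of_int (1 + A) * (1 + real xb0 + real yb0)
             + (real lb + real hb - 2) * (real_of_int A * real_of_int (1 + A) / 2)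
             + real_of_int (\<Sum>k\<in>{0..A}. \<lfloor>(real xh0 + real_of_int k * real lh) / real w\<rfloor>)
             + real_of_int SY))"
proof -
  have "0 < c" using assms(2,3) by simp
  obtain t where "a = y*t" "b = l*t" "0 < t" "0 < y" "coprime l y"
    using related_Lshape_delta_zero[OF assms(1,5,6) \<open>0 < c\<close> assms(7,8)] .
  then interpret delta_zero_Lshape a b c l h w y m x0 y0 z0 t
    using assms(4-7,10,11) \<open>0 < c\<close> by unfold_locales
  obtain K where K: "k0 = int K" using k0_nonneg nonneg_int_cases by blast
  show ?thesis
    unfolding Let_def theta_eq floor_z0_div_\<theta> k0_def[symmetric] K
      of_int_sum_floor_atMost_eq_floor_sum of_int_sum_floor_eq_floor_sum
    using denumerant_eq_minus_excess real_excess_if_k0_eq[OF _ K] real_excess_if_A_less_k0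
    by (auto simp: excess_def K field_simps)
qed

end
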